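(* For every $n\ge1$, the polynomial $T_{2n}(x)+T_{2n}(y)\in\mathbb{C}[x,y]$ is a product of exactly $n$ irreducible factors (each of which is not a constant).
   Context: $T_k$ denotes the Chebycheff polynomial of degree $k$, defined by $T_k(\cos\theta)=\cos(k\theta)$. *)

theory Defs
  imports Complex_Main "HOL-Computational_Algebra.Computational_Algebra"
begin

definition cheb :: "nat \<Rightarrow> complex poly" where
  "cheb k = (THE p. \<forall>t::real. poly p (complex_of_real (cos t)) = complex_of_real (cos (real k * t)))"

text \<open>Bivariate polynomials C[x,y] are represented as C[x][y] = complex poly poly
  (outer variable y, coefficients in C[x]).\<close>
definition polyX :: "complex poly \<Rightarrow> complex poly poly" where
  "polyX p = [:p:]"

definition polyY :: "complex poly \<Rightarrow> complex poly poly" where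
  "polyY p = map_poly (\<lambda>c. [:c:]) p"

end

theory Submission
  imports Defs "HOL-Computational_Algebra.Field_as_Ring"
begin

text \<open>
  For x = cos a and y = cos b we have T_2n(x) + T_2n(y) = cos (2na) + cos (2nb), which vanishes
  for a = \<theta>_k + b and a = \<theta>_k - b, where \<theta>_k = (2k+1)\<pi>/(2n) and k < n. For small b > 0 these
  are 2n distinct roots of the degree 2n polynomial T_2n(x) + T_2n(cos b) in x, and the two
  roots belonging to \<theta>_k are the roots of x^2 - 2 cos \<theta>_k x y + y^2 - sin^2 \<theta>_k at y = cos b.
  As this holds for infinitely many y,
  T_2n(x) + T_2n(y) = 2^(2n-1) \<Prod>k<n. (x^2 - 2 cos \<theta>_k x y + y^2 - sin^2 \<theta>_k).
  Each factor is irreducible: it is monic of degree 2 in y, so a factorization would give a root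
  y = r(x), and then g = r - x cos \<theta>_k satisfies g^2 = sin^2 \<theta>_k (1 - x^2), forcing the linear
  polynomial g to vanish at both 1 and -1. Unique factorization in C[x,y] then shows that every
  factorization into irreducibles has exactly n factors.
\<close>

lemma size_prime_factorization_irreducible:
  fixes p :: "'a::factorial_semiring"
  assumes "irreducible p"
  shows "size (prime_factorization p) = 1"
proof -
  have "prime (normalize p)"
    using assms by (simp flip: prime_elem_iff_irreducible)
  then have "prime_factorization (normalize p) = {#normalize p#}"
    by (rule prime_factorization_prime)
  then show ?thesis by simp
qed

lemma size_prime_factorization_prod_list:
  fixes fs :: "'a::factorial_semiring list"
  assumes "\<forall>f\<in>set fs. irreducible f"
  shows "size (prime_factorization (prod_list fs)) = length fs"
  using assms
proof (induction fs)
  case (Cons f fs)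
  then have "f \<noteq> 0" "prod_list fs \<noteq> 0" by (auto simp: prod_list_zero_iff)
  with Cons show ?case
    by (simp add: prime_factorization_mult size_prime_factorization_irreducible)
qed simp

lemma length_irreducible_factorization_unique:
  fixes fs gs :: "'a::factorial_semiring list"
  assumes "\<forall>f\<in>set fs. irreducible f" "\<forall>g\<in>set gs. irreducible g"
    and "prod_list fs = prod_list gs"
  shows "length fs = length gs"
  using assms by (metis size_prime_factorization_prod_list)

lemma irreducible_factors_mult_unit:
  fixes u :: "'a::algebraic_semidom"
  assumes "is_unit u" "\<forall>f\<in>set fs. irreducible f" "fs \<noteq> []"
  obtains gs where "length gs = length fs" "\<forall>g\<in>set gs. irreducible g"
    "prod_list gs = u * prod_list fs"
proof -
  obtain f fs' where fs: "fs = f # fs'"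
    using assms(3) by (cases fs) auto
  show thesis
    by (rule that[of "(u * f) # fs'"]) (use assms fs in \<open>auto simp: irreducible_mult_unit_left mult.assoc\<close>)
qed

lemma poly_eq_0_if_infinite_zeros:
  fixes p :: "'a::idom poly"
  assumes "infinite S" "\<And>x. x \<in> S \<Longrightarrow> poly p x = 0"
  shows "p = 0"
proof (rule ccontr)
  assume "p \<noteq> 0"
  then have "finite {x. poly p x = 0}"
    by (rule poly_roots_finite)
  moreover have "S \<subseteq> {x. poly p x = 0}"
    using assms(2) by blast
  ultimately show False
    using assms(1) finite_subset by blast
qed

lemma irreducible_monic_quadratic:
  fixes q :: "'a::idom_divide poly"
  assumes deg: "degree q = 2" and monic: "lead_coeff q = 1" and no_root: "\<And>r. poly q r \<noteq> 0"
  shows "irreducible q"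
proof (rule irreducibleI)
  show "q \<noteq> 0" "\<not> is_unit q"
    using deg by (auto simp: is_unit_poly_iff)
  fix a b assume ab: "q = a * b"
  then have "a \<noteq> 0" "b \<noteq> 0"
    using deg by auto
  then have deg_ab: "degree a + degree b = 2"
    using ab deg by (simp add: degree_mult_eq)
  have lc_ab: "lead_coeff a * lead_coeff b = 1"
    using monic unfolding ab lead_coeff_mult .
  have unit_if_const: "is_unit p" if "degree p = 0" "lead_coeff p dvd 1" for p :: "'a poly"
    using that by (auto elim!: degree_eq_zeroE simp: is_unit_const_poly_iff)
  show "is_unit a \<or> is_unit b"
  proof (rule ccontr)
    assume "\<not> (is_unit a \<or> is_unit b)"
    then have "degree a \<noteq> 0" "degree b \<noteq> 0"
      using unit_if_const lc_ab by (metis dvd_triv_left dvd_triv_right)+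
    with deg_ab have "degree a = 1" by simp
    then obtain a0 a1 where a: "a = [:a0, a1:]" "a1 \<noteq> 0"
      by (rule degree1_coeffs)
    then have "a1 * lead_coeff b = 1"
      using lc_ab by simp
    moreover have "poly a (- a0 * lead_coeff b) = a0 - a0 * (a1 * lead_coeff b)"
      by (simp add: a algebra_simps)
    ultimately have "poly a (- a0 * lead_coeff b) = 0"
      by simp
    then show False
      using no_root ab by simp
  qed
qed

text \<open>The polynomial x^2 - 2cxy + y^2 - s^2, as a polynomial in y with coefficients in K[x].\<close>
definition conic_poly :: "'a::comm_ring_1 \<Rightarrow> 'a \<Rightarrow> 'a poly poly" where
  "conic_poly c s = [:[:- (s\<^sup>2), 0, 1:], [:0, - 2 * c:], 1:]"

lemma poly_conic_poly_cos:
  "poly (conic_poly (of_real (cos \<theta>)) (of_real (sin \<theta>))) [:of_real (cos b):]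
     = [:- of_real (cos (\<theta> - b)), 1:] * [:- of_real (cos (\<theta> + b)), 1 :: 'a::{comm_ring_1, real_algebra_1}:]"
proof -
  have sum: "cos (\<theta> - b) + cos (\<theta> + b) = 2 * cos \<theta> * cos b"
    by (simp add: cos_add cos_diff)
  have "cos (\<theta> - b) * cos (\<theta> + b) = (cos \<theta> * cos b)\<^sup>2 - (sin \<theta> * sin b)\<^sup>2"
    by (simp add: cos_add cos_diff power2_eq_square algebra_simps)
  also have "\<dots> = (cos b)\<^sup>2 - (sin \<theta>)\<^sup>2"
    by (simp add: power_mult_distrib cos_squared_eq[of \<theta>] sin_squared_eq[of b] algebra_simps)
  finally have prod: "cos (\<theta> - b) * cos (\<theta> + b) = (cos b)\<^sup>2 - (sin \<theta>)\<^sup>2" .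
  have "of_real (cos (\<theta> - b)) + of_real (cos (\<theta> + b)) = (2 * of_real (cos \<theta>) * of_real (cos b) :: 'a)"
    using arg_cong[OF sum, of of_real] by simp
  moreover have "of_real (cos (\<theta> - b)) * of_real (cos (\<theta> + b)) = ((of_real (cos b))\<^sup>2 - (of_real (sin \<theta>))\<^sup>2 :: 'a)"
    using arg_cong[OF prod, of of_real] by simp
  ultimately show ?thesis
    by (simp add: conic_poly_def algebra_simps power2_eq_square)
qed

lemma irreducible_conic_poly:
  fixes c s :: "'a::field_char_0"
  assumes "s \<noteq> 0" and unit_circle: "c\<^sup>2 + s\<^sup>2 = 1"
  shows "irreducible (conic_poly c s)"
proof (rule irreducible_monic_quadratic)
  show "degree (conic_poly c s) = 2" "lead_coeff (conic_poly c s) = 1"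
    by (simp_all add: conic_poly_def)
  fix r :: "'a poly"
  show "poly (conic_poly c s) r \<noteq> 0"
  proof
    assume root: "poly (conic_poly c s) r = 0"
    define g where "g = r - [:0, c:]"
    have g_sq: "g * g = smult (s\<^sup>2) [:1, 0, -1:]"
    proof (rule poly_eq_poly_eq_iff[THEN iffD1], rule ext)
      fix t
      have "poly (poly (conic_poly c s) r) t = 0"
        using root by simp
      then have "- (s\<^sup>2) + t * t + poly r t * (- 2 * c * t + poly r t) = 0"
        by (simp add: conic_poly_def algebra_simps)
      then show "poly (g * g) t = poly (smult (s\<^sup>2) [:1, 0, -1:]) t"
        using unit_circle unfolding g_def by simp algebra
    qed
    then have "g \<noteq> 0"
      using \<open>s \<noteq> 0\<close> by auto
    with g_sq have "degree g = 1"
      using degree_mult_eq[of g g] \<open>s \<noteq> 0\<close> by simp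
    have "poly g x = 0" if "x * x = 1" for x
    proof -
      have "poly g x * poly g x = s\<^sup>2 * (1 - x * x)"
        using arg_cong[OF g_sq, of "\<lambda>p. poly p x"] by (simp add: algebra_simps)
      then show ?thesis
        using that by simp
    qed
    then have "g = 0"
      using \<open>degree g = 1\<close>
      by (intro poly_eqI_degree[of "{1, -1}"]) auto
    with \<open>g \<noteq> 0\<close> show False ..
  qed
qed

fun chebyshev :: "nat \<Rightarrow> 'a::comm_ring_1 poly" where
  "chebyshev 0 = 1"
| "chebyshev (Suc 0) = [:0, 1:]"
| "chebyshev (Suc (Suc n)) = [:0, 2:] * chebyshev (Suc n) - chebyshev n"

lemma poly_chebyshev_cos:
  "poly (chebyshev k) (of_real (cos t) :: 'a::{comm_ring_1, real_algebra_1}) = of_real (cos (real k * t))"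
proof (induction k rule: chebyshev.induct)
  case (3 n)
  have "cos (real (Suc (Suc n)) * t) = 2 * cos t * cos (real (Suc n) * t) - cos (real n * t)"
    using cos_add[of "real (Suc n) * t" t] cos_diff[of "real (Suc n) * t" t]
    by (simp add: algebra_simps)
  with 3 show ?case by simp
qed simp_all

lemma degree_chebyshev_le: "degree (chebyshev m) \<le> m"
  by (induction m rule: chebyshev.induct)
     (auto intro!: degree_diff_le order.trans[OF degree_mult_le] order.trans[OF degree_smult_le])

lemma coeff_chebyshev_Suc: "coeff (chebyshev (Suc m)) (Suc m) = 2 ^ m"
  by (induction m rule: chebyshev.induct)
     (auto simp: coeff_eq_0[OF le_less_trans[OF degree_chebyshev_le]])

lemma infinite_image_cos:
  assumes "inj g" "0 \<le> a" "a < b" "b \<le> pi"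
  shows "infinite ((\<lambda>t. g (cos t)) ` {a<..<b})"
proof -
  have "inj_on (\<lambda>t. g (cos t)) {a<..<b}"
  proof (rule inj_onI)
    fix x y assume x: "x \<in> {a<..<b}" and y: "y \<in> {a<..<b}" and "g (cos x) = g (cos y)"
    then have "cos x = cos y"
      using assms(1) by (simp add: inj_eq)
    moreover have "0 \<le> x" "x \<le> pi" "0 \<le> y" "y \<le> pi"
      using x y assms(2,4) by auto
    ultimately show "x = y"
      using cos_inj_pi by blast
  qed
  moreover have "infinite {a<..<b}"
    using assms(3) by (rule infinite_Ioo)
  ultimately show ?thesis
    using finite_image_iff by blast
qed

lemma cheb_eq_chebyshev: "cheb k = chebyshev k"
  unfolding cheb_def
proof (rule the_equality)
  fix p :: "complex poly"
  assume p: "\<forall>t. poly p (of_real (cos t)) = of_real (cos (real k * t))"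
  have "p - chebyshev k = 0"
  proof (rule poly_eq_0_if_infinite_zeros)
    show "infinite ((\<lambda>t. complex_of_real (cos t)) ` {0<..<pi})"
      by (rule infinite_image_cos) (auto intro: injI)
  qed (use p in \<open>auto simp: poly_chebyshev_cos\<close>)
  then show "p = chebyshev k" by simp
qed (simp add: poly_chebyshev_cos)

definition cheb_angle :: "nat \<Rightarrow> nat \<Rightarrow> real" where
  "cheb_angle n k = (2 * real k + 1) * pi / (2 * real n)"

lemma cheb_angle_bounds:
  assumes "k < n"
  shows "pi / (2 * real n) \<le> cheb_angle n k" "cheb_angle n k \<le> pi - pi / (2 * real n)"
proof -
  have n: "real n \<ge> 1" "real k + 1 \<le> real n"
    using assms by linarith+
  show "pi / (2 * real n) \<le> cheb_angle n k"
    using n by (simp add: cheb_angle_def field_simps)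
  have "cheb_angle n k + pi / (2 * real n) = (real k + 1) * pi / n"
    using n by (simp add: cheb_angle_def field_simps)
  moreover have "(real k + 1) * pi / n \<le> pi"
    using n by (simp add: pos_divide_le_eq mult_right_mono)
  ultimately show "cheb_angle n k \<le> pi - pi / (2 * real n)"
    by simp
qed

lemma cheb_angle_shift_bounds:
  assumes "k < n" "0 < b" "b < pi / (4 * real n)" "\<epsilon> \<in> {-1, 1}"
  shows "0 < cheb_angle n k + \<epsilon> * b" "cheb_angle n k + \<epsilon> * b < pi"
proof -
  have "b < pi / (2 * real n) / 2" "0 < pi / (2 * real n)"
    using assms by simp_all
  then show "0 < cheb_angle n k + \<epsilon> * b" "cheb_angle n k + \<epsilon> * b < pi"
    using cheb_angle_bounds[OF assms(1)] assms(2,4) by auto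
qed

lemma inj_on_cos_cheb_angle_shift:
  assumes "0 < b" "b < pi / (4 * real n)"
  shows "inj_on (\<lambda>(k, \<epsilon>). cos (cheb_angle n k + \<epsilon> * b)) ({..<n} \<times> {-1, 1})"
proof (rule inj_onI, clarify)
  fix j k :: nat and \<delta> \<epsilon> :: real
  assume j: "j < n" and k: "k < n" and \<delta>: "\<delta> \<in> {-1, 1}" and \<epsilon>: "\<epsilon> \<in> {-1, 1}"
    and cos_eq: "cos (cheb_angle n j + \<delta> * b) = cos (cheb_angle n k + \<epsilon> * b)"
  note bj = cheb_angle_shift_bounds[OF j assms \<delta>] and bk = cheb_angle_shift_bounds[OF k assms \<epsilon>]
  have eq: "cheb_angle n j + \<delta> * b = cheb_angle n k + \<epsilon> * b"
    using bj bk by (intro cos_inj_pi[OF _ _ _ _ cos_eq]) auto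
  have n: "real n > 0"
    using j by simp
  have "(real j - real k) * pi = real n * (\<epsilon> - \<delta>) * b"
    using eq n by (simp add: cheb_angle_def field_simps)
  moreover have "\<bar>real n * (\<epsilon> - \<delta>) * b\<bar> < pi"
  proof -
    have nb: "0 < real n * b" "real n * b < pi / 4"
      using n assms by (simp_all add: field_simps)
    have "\<bar>real n * (\<epsilon> - \<delta>) * b\<bar> = \<bar>\<epsilon> - \<delta>\<bar> * (real n * b)"
      using assms(1) by (simp add: abs_mult mult_ac)
    also have "\<dots> \<le> 2 * (real n * b)"
      using \<delta> \<epsilon> nb by (intro mult_right_mono) auto
    also have "\<dots> < pi"
      using nb by linarith
    finally show ?thesis .
  qed
  ultimately have "\<bar>real j - real k\<bar> * pi < 1 * pi"
    by (metis abs_mult abs_of_pos pi_gt_zero mult_1)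
  then have "\<bar>real j - real k\<bar> < 1"
    using pi_ge_zero by (rule mult_right_less_imp_less)
  then have "j = k"
    by linarith
  with eq assms(1) show "j = k \<and> \<delta> = \<epsilon>"
    by simp
qed

lemma cos_cheb_angle_shift:
  assumes "n \<ge> 1" "\<epsilon> \<in> {-1, 1}"
  shows "cos (real (2 * n) * (cheb_angle n k + \<epsilon> * b)) = - cos (real (2 * n) * b)"
proof -
  have "real (2 * n) * cheb_angle n k = real (2 * k + 1) * pi"
    using assms(1) by (simp add: cheb_angle_def)
  then have "real (2 * n) * (cheb_angle n k + \<epsilon> * b) = real (2 * k + 1) * pi + \<epsilon> * (real (2 * n) * b)"
    by (simp only: distrib_left mult.left_commute)
  moreover have "cos (real (2 * k + 1) * pi + x) = - cos x" for x
  proof -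
    have "cos (real (2 * k + 1) * pi) = -1"
      by (simp only: cos_npi) simp
    moreover have "sin (real (2 * k + 1) * pi) = 0"
      by (rule sin_npi)
    ultimately show ?thesis
      by (simp add: cos_add)
  qed
  ultimately show ?thesis
    using assms(2) by auto
qed

lemma chebyshev_plus_cos_factorization:
  assumes n: "n \<ge> 1" and b: "0 < b" "b < pi / (4 * real n)"
  shows "chebyshev (2 * n) + [:complex_of_real (cos (real (2 * n) * b)):]
    = smult (2 ^ (2 * n - 1)) (\<Prod>k<n. [:- of_real (cos (cheb_angle n k - b)), 1:]
                                       * [:- of_real (cos (cheb_angle n k + b)), 1:])"
    (is "?p = smult ?c (\<Prod>k<n. ?f k)")
proof -
  let ?root = "\<lambda>(k, \<epsilon>). complex_of_real (cos (cheb_angle n k + \<epsilon> * b))"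
  let ?I = "{..<n} \<times> {-1, 1 :: real}"
  have deg_f: "degree (?f k) = 2" and lc_f: "lead_coeff (?f k) = 1" for k
    by (simp_all add: degree_mult_eq)
  then have deg_prod: "degree (\<Prod>k<n. ?f k) = 2 * n"
    by (subst degree_prod_sum_eq) auto
  have lc_prod: "lead_coeff (\<Prod>k<n. ?f k) = 1"
    using lc_f by (simp add: lead_coeff_prod)
  have deg_p: "degree ?p \<le> 2 * n"
    using degree_chebyshev_le[of "2 * n"] by (intro degree_add_le) auto
  obtain m where m: "2 * n = Suc m"
    using n by (metis Suc_pred' mult_pos_pos pos2 less_le_trans zero_less_one)
  have coeff_p: "coeff ?p (2 * n) = ?c"
    using coeff_chebyshev_Suc[of m, where 'a = complex] by (simp add: m)
  have card_roots: "card (?root ` ?I) = 2 * n"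
  proof -
    have "inj_on (\<lambda>(k, \<epsilon>). cos (cheb_angle n k + \<epsilon> * b)) ?I"
      using b by (rule inj_on_cos_cheb_angle_shift)
    then have "inj_on ?root ?I"
      by (auto simp: inj_on_def)
    then show ?thesis
      by (simp add: card_image card_cartesian_product)
  qed
  show ?thesis
  proof (rule poly_eqI_degree_lead_coeff[where n = "2 * n" and A = "?root ` ?I"])
    show "coeff ?p (2 * n) = coeff (smult ?c (\<Prod>k<n. ?f k)) (2 * n)"
      using coeff_p deg_prod lc_prod by simp
    show "2 * n \<le> card (?root ` ?I)" "degree ?p \<le> 2 * n"
      "degree (smult ?c (\<Prod>k<n. ?f k)) \<le> 2 * n"
      using card_roots deg_p deg_prod by simp_all
    fix z assume "z \<in> ?root ` ?I"
    then obtain k \<epsilon> where k: "k < n" and \<epsilon>: "\<epsilon> \<in> {-1, 1}"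
      and z: "z = of_real (cos (cheb_angle n k + \<epsilon> * b))"
      by auto
    have "poly ?p z = 0"
      using cos_cheb_angle_shift[OF n \<epsilon>] by (simp add: z poly_chebyshev_cos)
    moreover have "poly (?f k) z = 0"
      using \<epsilon> by (auto simp: z)
    then have "poly (smult ?c (\<Prod>k<n. ?f k)) z = 0"
      using k by (auto simp: poly_prod intro: prod_zero)
    ultimately show "poly ?p z = poly (smult ?c (\<Prod>k<n. ?f k)) z"
      by simp
  qed
qed

definition cheb_factor :: "nat \<Rightarrow> nat \<Rightarrow> complex poly poly" where
  "cheb_factor n k = conic_poly (of_real (cos (cheb_angle n k))) (of_real (sin (cheb_angle n k)))"

lemma irreducible_cheb_factor:
  assumes "k < n"
  shows "irreducible (cheb_factor n k)"
  unfolding cheb_factor_def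
proof (rule irreducible_conic_poly)
  have "0 < pi / (2 * real n)"
    using assms by simp
  then have "sin (cheb_angle n k) > 0"
    using cheb_angle_bounds[OF assms] by (intro sin_gt_zero) auto
  then show "complex_of_real (sin (cheb_angle n k)) \<noteq> 0"
    by simp
  show "(complex_of_real (cos (cheb_angle n k)))\<^sup>2 + (complex_of_real (sin (cheb_angle n k)))\<^sup>2 = 1"
    by (simp flip: of_real_power of_real_add)
qed

lemma poly_polyY_const: "poly (polyY p) [:y:] = [:poly p y:]"
  unfolding polyY_def by (simp flip: pcompose_altdef add: pcompose_pCons_0)

lemma cheb_sum_factorization:
  assumes n: "n \<ge> 1"
  shows "polyX (cheb (2 * n)) + polyY (cheb (2 * n))
    = [:[:2 ^ (2 * n - 1):]:] * (\<Prod>k<n. cheb_factor n k)"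
    (is "?P = ?R")
proof -
  let ?S = "(\<lambda>b. [:complex_of_real (cos b):]) ` {0<..<pi / (4 * real n)}"
  have "infinite ?S"
    using n by (intro infinite_image_cos) (auto intro: injI simp: field_simps)
  moreover have "poly (?P - ?R) y = 0" if "y \<in> ?S" for y
  proof -
    from that obtain b where b: "0 < b" "b < pi / (4 * real n)" and y: "y = [:of_real (cos b):]"
      by auto
    have "poly ?P y = chebyshev (2 * n) + [:of_real (cos (real (2 * n) * b)):]"
      by (simp add: y polyX_def poly_polyY_const cheb_eq_chebyshev poly_chebyshev_cos)
    also have "\<dots> = poly ?R y"
      using chebyshev_plus_cos_factorization[OF n b]
      by (simp add: y cheb_factor_def poly_conic_poly_cos poly_prod)
    finally show ?thesis
      by simp
  qed
  ultimately have "?P - ?R = 0"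
    by (rule poly_eq_0_if_infinite_zeros)
  then show ?thesis
    by simp
qed

theorem mainTheorem7:
  fixes n :: nat
  assumes "n \<ge> 1"
  shows "(\<exists>fs :: complex poly poly list.
            length fs = n \<and> (\<forall>f\<in>set fs. irreducible f) \<and>
            prod_list fs = polyX (cheb (2*n)) + polyY (cheb (2*n)))
       \<and> (\<forall>fs :: complex poly poly list.
            (\<forall>f\<in>set fs. irreducible f) \<and>
            prod_list fs = polyX (cheb (2*n)) + polyY (cheb (2*n)) \<longrightarrow> length fs = n)"
proof -
  let ?P = "polyX (cheb (2 * n)) + polyY (cheb (2 * n))"
  let ?u = "[:[:2 ^ (2 * n - 1):]:] :: complex poly poly"
  let ?fs = "map (cheb_factor n) [0..<n]"
  have "is_unit ?u"
    by (simp add: is_unit_const_poly_iff dvd_field_iff)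
  moreover have "\<forall>f\<in>set ?fs. irreducible f"
    by (auto intro: irreducible_cheb_factor)
  moreover have "?fs \<noteq> []"
    using assms by simp
  ultimately obtain gs where gs: "length gs = n" "\<forall>g\<in>set gs. irreducible g"
    and "prod_list gs = ?u * prod_list ?fs"
    by (metis irreducible_factors_mult_unit length_map length_upt minus_nat.diff_0)
  moreover have "?u * prod_list ?fs = ?P"
    using cheb_sum_factorization[OF assms]
    by (simp add: prod.distinct_set_conv_list[symmetric] atLeast0LessThan)
  ultimately have "prod_list gs = ?P"
    by simp
  show ?thesis
  proof (intro conjI allI impI)
    show "\<exists>fs. length fs = n \<and> (\<forall>f\<in>set fs. irreducible f) \<and> prod_list fs = ?P"
      using gs \<open>prod_list gs = ?P\<close> by blast
    show "length fs = n" if "(\<forall>f\<in>set fs. irreducible f) \<and> prod_list fs = ?P" for fs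
      using that gs \<open>prod_list gs = ?P\<close> length_irreducible_factorization_unique[of fs gs] by simp
  qed
qed

end
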